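(* $\mathbb E\big[\widetilde V^{\textsc{off}}_1[\omega_1]\big]\le\mathbb E\big[V^{\textsc{off}}[\omega]\big]+O\big(K^{3/2}\sqrt T\big)$.
   Context: Model. There are $m$ resources and $n$ arrival types; type $j$ has cost vector $c_j\in\mathbb R^m$ and allowed resources $\mathcal S_j\subseteq[m]$, $\max_{i,j}|c_{ji}|<\infty$. The horizon has $T$ periods partitioned into $K=\Theta(1)$ epochs ($T$ a multiple of $K$), epoch $k$ being periods $(k-1)T/K+1,\dots,kT/K$. In period $t$ one arrival of type $j^t$ occurs, $j^1,\dots,j^T$ i.i.d. with $\mathbb P(j^t=j)=p_j$, $p$ not depending on $T$; $\omega=(j^t)_{t\le T}$, $\omega_1=(j^t)_{t\le T/K}$, $\Lambda_j(t_1:t_2)=\sum_{t_1<\tau\le t_2}\mathbf 1\{j^\tau=j\}$. Each epoch $k$ and resource $i$ has a target $\rho_{ki}\in[0,1]$ and a convex $L$-Lipschitz $g_{ki}:[0,1]\to\mathbb R_{\ge0}$ with $g_{ki}(\rho_{ki})=0$. $O(\cdot)$ is as $T\to\infty$ with hidden constants depending only on $m,n,c,L,p$. Offline benchmark: $V^{\textsc{off}}[\omega]$ is the minimum over nonnegative integers $Z_{ji}(kT/K)$ ($Z_{ji}(0)=0$; write $Z(t_1:t_2)=Z(t_2)-Z(t_1)$, $Z_i=\sum_jZ_{ji}$) subject to $\sum_iZ_{ji}((k-1)T/K:kT/K)\le\Lambda_j((k-1)T/K:kT/K)$ for all $j,k$ and $Z_{ji}(T)=0$ for $i\notin\mathcal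 S_j$, of $\sum_{j,i}c_{ji}Z_{ji}(T)+\frac TK\sum_k\sum_ik\,g_{ki}\big(Z_i(kT/K)/(kT/K)\big)$. Proxy offline optimum for epoch 1: $\widetilde V^{\textsc{off}}_1[\omega_1]$ is the minimum over nonnegative integers $Z^{(k)}_{ji}$ ($j\in[n],i\in[m],k\in[K]$) with $Z^{(k)}_{ji}=0$ for $i\notin\mathcal S_j$ and $\sum_iZ^{(k)}_{ji}\le\Lambda_j(0:T/K)$ for all $j,k$, of $$\sum_{j,i}c_{ji}\sum_{k}Z^{(k)}_{ji}+\frac TK\sum_{k\in[K]}\sum_ik\,g_{ki}\Big(\frac{\sum_j\sum_{k''=1}^{k}Z^{(k'')}_{ji}}{kT/K}\Big),$$ i.e. the offline problem in which every epoch is assumed to have the same arrival counts as epoch 1. *)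

theory Defs
  imports "HOL-Probability.Probability"
begin

text \<open>Types are indexed by j < n, resources by i < m, epochs by k in {1..K},
  periods by t in {1..T}.  An arrival sequence is omega :: nat => nat,
  omega t being the type of the arrival in period t.  Allocations are described
  by per-epoch increments X k j i (nonnegative integers), so that the cumulative
  allocation Z_ji(kT/K) is the sum of X k'' j i over k'' = 1..k.\<close>

definition arrivals :: "(nat \<Rightarrow> nat) \<Rightarrow> nat \<Rightarrow> nat \<Rightarrow> nat \<Rightarrow> nat" where
  "arrivals \<omega> j t1 t2 = card {t \<in> {t1<..t2}. \<omega> t = j}"

definition alloc_obj ::
  "nat \<Rightarrow> nat \<Rightarrow> (nat \<Rightarrow> nat \<Rightarrow> real) \<Rightarrow> nat \<Rightarrow> nat \<Rightarrow>
   (nat \<Rightarrow> nat \<Rightarrow> real \<Rightarrow> real) \<Rightarrow> (nat \<Rightarrow> nat \<Rightarrow> nat \<Rightarrow> nat) \<Rightarrow> real" where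
  "alloc_obj n m c K T g X =
     (\<Sum>j<n. \<Sum>i<m. c j i * real (\<Sum>k\<in>{1..K}. X k j i))
     + real T / real K *
       (\<Sum>k\<in>{1..K}. \<Sum>i<m. real k *
          g k i (real (\<Sum>j<n. \<Sum>k''\<in>{1..k}. X k'' j i) / (real k * real T / real K)))"

definition supp_ok :: "nat \<Rightarrow> nat \<Rightarrow> (nat \<Rightarrow> nat set) \<Rightarrow> nat \<Rightarrow> (nat \<Rightarrow> nat \<Rightarrow> nat \<Rightarrow> nat) \<Rightarrow> bool" where
  "supp_ok n m S K X \<longleftrightarrow> (\<forall>k j i. X k j i \<noteq> 0 \<longrightarrow> k \<in> {1..K} \<and> j < n \<and> i < m \<and> i \<in> S j)"

definition V_off ::
  "nat \<Rightarrow> nat \<Rightarrow> (nat \<Rightarrow> nat \<Rightarrow> real) \<Rightarrow> (nat \<Rightarrow> nat set) \<Rightarrow> nat \<Rightarrow> nat \<Rightarrow>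
   (nat \<Rightarrow> nat \<Rightarrow> real \<Rightarrow> real) \<Rightarrow> (nat \<Rightarrow> nat) \<Rightarrow> real" where
  "V_off n m c S K T g \<omega> = Inf (alloc_obj n m c K T g ` {X. supp_ok n m S K X \<and>
      (\<forall>k\<in>{1..K}. \<forall>j<n. (\<Sum>i<m. X k j i) \<le> arrivals \<omega> j ((k - 1) * (T div K)) (k * (T div K)))})"

definition V_proxy1 ::
  "nat \<Rightarrow> nat \<Rightarrow> (nat \<Rightarrow> nat \<Rightarrow> real) \<Rightarrow> (nat \<Rightarrow> nat set) \<Rightarrow> nat \<Rightarrow> nat \<Rightarrow>
   (nat \<Rightarrow> nat \<Rightarrow> real \<Rightarrow> real) \<Rightarrow> (nat \<Rightarrow> nat) \<Rightarrow> real" where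
  "V_proxy1 n m c S K T g \<omega> = Inf (alloc_obj n m c K T g ` {X. supp_ok n m S K X \<and>
      (\<forall>k\<in>{1..K}. \<forall>j<n. (\<Sum>i<m. X k j i) \<le> arrivals \<omega> j 0 (T div K))})"

text \<open>Law of omega = (j^1,...,j^T): i.i.d. with distribution P (values outside {1..T} are 0).\<close>
definition arrival_law :: "nat pmf \<Rightarrow> nat \<Rightarrow> (nat \<Rightarrow> nat) pmf" where
  "arrival_law P T = Pi_pmf {1..T} 0 (\<lambda>_. P)"

end

theory Submission
  imports Defs
begin

(* Capping an allocation that is feasible for the true arrival counts at the epoch-1 counts
   yields an allocation feasible for the proxy problem. Costs are linear and the penalties are
   L-Lipschitz, so the objective grows by at most (sum |c| + L K) times the amount removed, which
   is at most sum_k sum_j (Lambda_j(epoch k) - Lambda_j(epoch 1))^+.  For k >= 2 this surplus is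
   bounded by |sum_t Z_t| over the T/K periods t of epoch 1, where
   Z_t = 1{j^(t + (k-1)T/K) = j} - 1{j^t = j}.  The periods involved are distinct, so the Z_t
   are pairwise orthogonal with E Z_t^2 <= 1, and E |sum_t Z_t| <= sqrt (T/K).  Summing over
   epochs and types gives (sum |c| + L K) K n sqrt (T/K) = O(K^(3/2) sqrt T). *)

section \<open>Orthogonal sums and independent coordinates\<close>

lemma (in prob_space) expectation_abs_le_sqrt_second_moment:
  fixes X :: "'a \<Rightarrow> real"
  assumes "integrable M X" "integrable M (\<lambda>x. (X x)\<^sup>2)"
  shows "expectation (\<lambda>x. \<bar>X x\<bar>) \<le> sqrt (expectation (\<lambda>x. (X x)\<^sup>2))"
proof -
  have "0 \<le> variance (\<lambda>x. \<bar>X x\<bar>)" by (rule variance_positive)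
  also have "\<dots> = expectation (\<lambda>x. (X x)\<^sup>2) - (expectation (\<lambda>x. \<bar>X x\<bar>))\<^sup>2"
    using variance_eq[of "\<lambda>x. \<bar>X x\<bar>"] assms by simp
  finally show ?thesis by (intro real_le_rsqrt) simp
qed

lemma integral_sum_orthogonal_square:
  fixes Z :: "'i \<Rightarrow> 'a \<Rightarrow> real"
  assumes "finite A"
    and int: "\<And>s t. s \<in> A \<Longrightarrow> t \<in> A \<Longrightarrow> integrable M (\<lambda>x. Z s x * Z t x)"
    and orth: "\<And>s t. s \<in> A \<Longrightarrow> t \<in> A \<Longrightarrow> s \<noteq> t \<Longrightarrow> (\<integral>x. Z s x * Z t x \<partial>M) = 0"
  shows "(\<integral>x. (\<Sum>t\<in>A. Z t x)\<^sup>2 \<partial>M) = (\<Sum>t\<in>A. \<integral>x. (Z t x)\<^sup>2 \<partial>M)"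
proof -
  have diag: "(\<Sum>t\<in>A. \<integral>x. Z s x * Z t x \<partial>M) = (\<integral>x. (Z s x)\<^sup>2 \<partial>M)" if "s \<in> A" for s
    using that \<open>finite A\<close> orth by (subst sum.remove[of A s]) (auto simp: power2_eq_square intro!: sum.neutral)
  have "(\<integral>x. (\<Sum>t\<in>A. Z t x)\<^sup>2 \<partial>M) = (\<integral>x. (\<Sum>s\<in>A. \<Sum>t\<in>A. Z s x * Z t x) \<partial>M)"
    by (simp add: power2_eq_square sum_product)
  also have "\<dots> = (\<Sum>s\<in>A. \<Sum>t\<in>A. \<integral>x. Z s x * Z t x \<partial>M)"
    using int by (simp add: Bochner_Integration.integral_sum integrable_sum)
  also have "\<dots> = (\<Sum>t\<in>A. \<integral>x. (Z t x)\<^sup>2 \<partial>M)"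
    using diag by simp
  finally show ?thesis .
qed

lemma expectation_Pi_pmf_two_coords:
  fixes f h :: "'b \<Rightarrow> real"
  assumes "finite A" "u \<in> A" "v \<in> A" "u \<noteq> v"
    and "integrable (measure_pmf (p u)) f" "integrable (measure_pmf (p v)) h"
    and "\<And>y. f y \<ge> 0" "\<And>y. h y \<ge> 0"
  shows "measure_pmf.expectation (Pi_pmf A dflt p) (\<lambda>\<omega>. f (\<omega> u) * h (\<omega> v))
       = measure_pmf.expectation (p u) f * measure_pmf.expectation (p v) h"
proof -
  define F where "F x = (if x = u then f else if x = v then h else (\<lambda>_. 1))" for x
  have uv: "{u, v} \<subseteq> A" using assms by simp
  have prod_uv: "(\<Prod>x\<in>A. G x) = G u * G v" if "\<And>x. x \<in> A - {u, v} \<Longrightarrow> G x = 1" for G :: "'a \<Rightarrow> real"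
    using prod.mono_neutral_left[OF \<open>finite A\<close> uv, of G] that assms by auto
  have "measure_pmf.expectation (Pi_pmf A dflt p) (\<lambda>\<omega>. f (\<omega> u) * h (\<omega> v))
      = measure_pmf.expectation (Pi_pmf A dflt p) (\<lambda>\<omega>. \<Prod>x\<in>A. F x (\<omega> x))"
    using assms by (subst prod_uv) (auto simp: F_def)
  also have "\<dots> = (\<Prod>x\<in>A. measure_pmf.expectation (p x) (F x))"
    using assms by (intro expectation_prod_Pi_pmf) (auto simp: F_def)
  also have "\<dots> = measure_pmf.expectation (p u) f * measure_pmf.expectation (p v) h"
    using assms by (subst prod_uv) (auto simp: F_def)
  finally show ?thesis .
qed

section \<open>Arrival counts\<close>

lemma arrivals_eq_sum_indicator: "real (arrivals \<omega> j a b) = (\<Sum>t\<in>{a<..b}. of_bool (\<omega> t = j))"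
  by (simp add: arrivals_def sum.If_cases Int_def conj_commute)

lemma arrivals_shift: "real (arrivals \<omega> j e (d + e)) = (\<Sum>t\<in>{1..d}. of_bool (\<omega> (t + e) = j))"
proof -
  have "{e<..d + e} = {1 + e..d + e}" by auto
  then show ?thesis unfolding arrivals_eq_sum_indicator by (simp only: sum.shift_bounds_cl_nat_ivl)
qed

lemma sum_arrivals_le: "(\<Sum>j<n. arrivals \<omega> j a b) \<le> b - a"
proof -
  have "real (\<Sum>j<n. arrivals \<omega> j a b) = (\<Sum>j<n. \<Sum>t\<in>{a<..b}. of_bool (\<omega> t = j))"
    by (simp only: of_nat_sum arrivals_eq_sum_indicator)
  also have "\<dots> = (\<Sum>t\<in>{a<..b}. \<Sum>j<n. of_bool (\<omega> t = j))"
    by (rule sum.swap)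
  also have "\<dots> \<le> (\<Sum>t\<in>{a<..b}. 1)"
    by (intro sum_mono) (auto simp: card_le_Suc0_iff_eq)
  also have "\<dots> = real (b - a)"
    by simp
  finally show ?thesis by linarith
qed

section \<open>Capping allocations at smaller capacities\<close>

definition feasible_allocs ::
  "nat \<Rightarrow> nat \<Rightarrow> (nat \<Rightarrow> nat set) \<Rightarrow> nat \<Rightarrow> (nat \<Rightarrow> nat \<Rightarrow> nat) \<Rightarrow> (nat \<Rightarrow> nat \<Rightarrow> nat \<Rightarrow> nat) set" where
  "feasible_allocs n m S K b = {X. supp_ok n m S K X \<and> (\<forall>k\<in>{1..K}. \<forall>j<n. (\<Sum>i<m. X k j i) \<le> b k j)}"

lemma V_off_eq_Inf_feasible_allocs:
  "V_off n m c S K T g \<omega> = Inf (alloc_obj n m c K T g `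
     feasible_allocs n m S K (\<lambda>k j. arrivals \<omega> j ((k - 1) * (T div K)) (k * (T div K))))"
  by (simp add: V_off_def feasible_allocs_def)

lemma V_proxy1_eq_Inf_feasible_allocs:
  "V_proxy1 n m c S K T g \<omega> = Inf (alloc_obj n m c K T g `
     feasible_allocs n m S K (\<lambda>k j. arrivals \<omega> j 0 (T div K)))"
  by (simp add: V_proxy1_def feasible_allocs_def)

lemma finite_feasible_allocs: "finite (feasible_allocs n m S K b)"
proof -
  define N where "N = (\<Sum>k\<in>{1..K}. \<Sum>j<n. b k j)"
  define A where "A = {1..K} \<times> {..<n} \<times> {..<m}"
  have bound: "X k j i \<le> N" if "X \<in> feasible_allocs n m S K b" "k \<in> {1..K}" "j < n" "i < m" for X k j i
  proof -
    have "X k j i \<le> (\<Sum>i<m. X k j i)" using that by (intro member_le_sum) auto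
    also have "\<dots> \<le> b k j" using that by (auto simp: feasible_allocs_def)
    also have "\<dots> \<le> (\<Sum>j<n. b k j)" using that by (intro member_le_sum) auto
    also have "\<dots> \<le> N" unfolding N_def using that by (intro member_le_sum) auto
    finally show ?thesis .
  qed
  have "(\<lambda>X (k, j, i). X k j i) ` feasible_allocs n m S K b
      \<subseteq> {f. \<forall>x. (x \<in> A \<longrightarrow> f x \<in> {0..N}) \<and> (x \<notin> A \<longrightarrow> f x = 0)}"
    using bound by (fastforce simp: feasible_allocs_def supp_ok_def A_def)
  moreover have "finite {f. \<forall>x. (x \<in> A \<longrightarrow> f x \<in> {0..N}) \<and> (x \<notin> A \<longrightarrow> f x = (0::nat))}"
    by (intro finite_set_of_finite_funs) (auto simp: A_def)
  moreover have "inj (\<lambda>(X :: nat \<Rightarrow> nat \<Rightarrow> nat \<Rightarrow> nat) (k, j, i). X k j i)"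
    by (intro injI ext) (metis case_prod_conv)
  ultimately show ?thesis
    by (meson finite_imageD finite_subset inj_on_subset subset_UNIV)
qed

lemma sum_min_remaining:
  fixes x :: "nat \<Rightarrow> nat"
  shows "(\<Sum>i<m. min (x i) (B - (\<Sum>i'<i. x i'))) = min (\<Sum>i<m. x i) (B :: nat)"
  by (induction m) (auto simp: min_def)

definition cap_alloc ::
  "(nat \<Rightarrow> nat \<Rightarrow> nat) \<Rightarrow> (nat \<Rightarrow> nat \<Rightarrow> nat \<Rightarrow> nat) \<Rightarrow> nat \<Rightarrow> nat \<Rightarrow> nat \<Rightarrow> nat" where
  "cap_alloc b X k j i = min (X k j i) (b k j - (\<Sum>i'<i. X k j i'))"

lemma cap_alloc_le: "cap_alloc b X k j i \<le> X k j i"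
  by (simp add: cap_alloc_def)

lemma sum_cap_alloc: "(\<Sum>i<m. cap_alloc b X k j i) = min (\<Sum>i<m. X k j i) (b k j)"
  unfolding cap_alloc_def by (rule sum_min_remaining)

lemma cap_alloc_feasible:
  assumes "supp_ok n m S K X"
  shows "cap_alloc b X \<in> feasible_allocs n m S K b"
proof -
  have "supp_ok n m S K (cap_alloc b X)"
    using assms cap_alloc_le[of b X] unfolding supp_ok_def by (metis le_zero_eq)
  then show ?thesis
    by (simp add: feasible_allocs_def sum_cap_alloc)
qed

definition alloc_gap ::
  "nat \<Rightarrow> nat \<Rightarrow> nat \<Rightarrow> (nat \<Rightarrow> nat \<Rightarrow> nat \<Rightarrow> nat) \<Rightarrow> (nat \<Rightarrow> nat \<Rightarrow> nat \<Rightarrow> nat) \<Rightarrow> real" where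
  "alloc_gap n m K X X' = (\<Sum>k\<in>{1..K}. \<Sum>j<n. \<Sum>i<m. real (X k j i) - real (X' k j i))"

lemma alloc_gap_cap_alloc_le:
  assumes "X \<in> feasible_allocs n m S K b"
  shows "alloc_gap n m K X (cap_alloc b' X) \<le> (\<Sum>k\<in>{1..K}. \<Sum>j<n. real (b k j - b' k j))"
  unfolding alloc_gap_def
proof (intro sum_mono)
  fix k j assume "k \<in> {1..K}" "j \<in> {..<n}"
  then have "(\<Sum>i<m. X k j i) \<le> b k j"
    using assms by (auto simp: feasible_allocs_def)
  then show "(\<Sum>i<m. real (X k j i) - real (cap_alloc b' X k j i)) \<le> real (b k j - b' k j)"
    by (simp add: sum_subtractf sum_cap_alloc min_def of_nat_diff flip: of_nat_sum)
qed

lemma alloc_gap_ge_partial_sum: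
  assumes le: "\<And>k j i. X' k j i \<le> X k j i"
    and "K' \<subseteq> {1..K}" "J \<subseteq> {..<n}" "I \<subseteq> {..<m}"
  shows "(\<Sum>k\<in>K'. \<Sum>j\<in>J. \<Sum>i\<in>I. real (X k j i) - real (X' k j i)) \<le> alloc_gap n m K X X'"
proof -
  have "(\<Sum>k\<in>K'. \<Sum>j\<in>J. \<Sum>i\<in>I. real (X k j i) - real (X' k j i))
      \<le> (\<Sum>k\<in>K'. \<Sum>j\<in>J. \<Sum>i<m. real (X k j i) - real (X' k j i))"
    using assms by (intro sum_mono sum_mono2) auto
  also have "\<dots> \<le> (\<Sum>k\<in>K'. \<Sum>j<n. \<Sum>i<m. real (X k j i) - real (X' k j i))"
    using assms by (intro sum_mono sum_mono2 sum_nonneg) auto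
  also have "\<dots> \<le> alloc_gap n m K X X'"
    unfolding alloc_gap_def using assms by (intro sum_mono2 sum_nonneg) auto
  finally show ?thesis .
qed

definition alloc_cost :: "nat \<Rightarrow> nat \<Rightarrow> (nat \<Rightarrow> nat \<Rightarrow> real) \<Rightarrow> nat \<Rightarrow> (nat \<Rightarrow> nat \<Rightarrow> nat \<Rightarrow> nat) \<Rightarrow> real" where
  "alloc_cost n m c K X = (\<Sum>j<n. \<Sum>i<m. c j i * real (\<Sum>k\<in>{1..K}. X k j i))"

definition cum_alloc :: "nat \<Rightarrow> (nat \<Rightarrow> nat \<Rightarrow> nat \<Rightarrow> nat) \<Rightarrow> nat \<Rightarrow> nat \<Rightarrow> real" where
  "cum_alloc n X k i = real (\<Sum>j<n. \<Sum>k''\<in>{1..k}. X k'' j i)"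

definition alloc_penalty ::
  "nat \<Rightarrow> nat \<Rightarrow> nat \<Rightarrow> nat \<Rightarrow> (nat \<Rightarrow> nat \<Rightarrow> real \<Rightarrow> real) \<Rightarrow> (nat \<Rightarrow> nat \<Rightarrow> nat \<Rightarrow> nat) \<Rightarrow> real" where
  "alloc_penalty n m K T g X = (\<Sum>k\<in>{1..K}. \<Sum>i<m.
     (real k * real T / real K) * g k i (cum_alloc n X k i / (real k * real T / real K)))"

lemma alloc_obj_eq: "alloc_obj n m c K T g X = alloc_cost n m c K X + alloc_penalty n m K T g X"
  by (simp add: alloc_obj_def alloc_cost_def alloc_penalty_def cum_alloc_def sum_distrib_left mult_ac)

lemma alloc_cost_le:
  assumes le: "\<And>k j i. X' k j i \<le> X k j i"
  shows "alloc_cost n m c K X' \<le> alloc_cost n m c K X + (\<Sum>j<n. \<Sum>i<m. \<bar>c j i\<bar>) * alloc_gap n m K X X'"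
proof -
  have term_le: "c j i * real (\<Sum>k\<in>{1..K}. X' k j i)
      \<le> c j i * real (\<Sum>k\<in>{1..K}. X k j i) + \<bar>c j i\<bar> * alloc_gap n m K X X'"
    if "j < n" "i < m" for j i
  proof -
    define \<delta> where "\<delta> = (\<Sum>k\<in>{1..K}. real (X k j i) - real (X' k j i))"
    have "0 \<le> \<delta>" "\<delta> \<le> alloc_gap n m K X X'"
      using alloc_gap_ge_partial_sum[OF le, of "{1..K}" K "{j}" n "{i}" m] that
      by (auto simp: \<delta>_def le intro: sum_nonneg)
    have "- (c j i * \<delta>) \<le> \<bar>c j i\<bar> * \<delta>"
      using abs_ge_minus_self[of "c j i * \<delta>"] \<open>0 \<le> \<delta>\<close> by (simp add: abs_mult)
    also have "\<dots> \<le> \<bar>c j i\<bar> * alloc_gap n m K X X'"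
      using \<open>\<delta> \<le> alloc_gap n m K X X'\<close> by (intro mult_left_mono) auto
    finally show ?thesis
      by (simp add: \<delta>_def sum_subtractf right_diff_distrib)
  qed
  have "alloc_cost n m c K X'
      \<le> (\<Sum>j<n. \<Sum>i<m. c j i * real (\<Sum>k\<in>{1..K}. X k j i) + \<bar>c j i\<bar> * alloc_gap n m K X X')"
    unfolding alloc_cost_def by (intro sum_mono term_le) auto
  also have "\<dots> = alloc_cost n m c K X + (\<Sum>j<n. \<Sum>i<m. \<bar>c j i\<bar>) * alloc_gap n m K X X'"
    by (simp add: alloc_cost_def sum.distrib sum_distrib_right)
  finally show ?thesis .
qed

lemma sum_cum_alloc_diff_le_alloc_gap:
  assumes le: "\<And>k j i. X' k j i \<le> X k j i" and "k \<le> K"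
  shows "(\<Sum>i<m. cum_alloc n X k i - cum_alloc n X' k i) \<le> alloc_gap n m K X X'"
proof -
  have "(\<Sum>i<m. cum_alloc n X k i - cum_alloc n X' k i)
      = (\<Sum>i<m. \<Sum>j<n. \<Sum>k''\<in>{1..k}. real (X k'' j i) - real (X' k'' j i))"
    by (simp add: cum_alloc_def sum_subtractf)
  also have "\<dots> = (\<Sum>j<n. \<Sum>i<m. \<Sum>k''\<in>{1..k}. real (X k'' j i) - real (X' k'' j i))"
    by (rule sum.swap)
  also have "\<dots> = (\<Sum>j<n. \<Sum>k''\<in>{1..k}. \<Sum>i<m. real (X k'' j i) - real (X' k'' j i))"
    by (intro sum.cong refl sum.swap)
  also have "\<dots> = (\<Sum>k''\<in>{1..k}. \<Sum>j<n. \<Sum>i<m. real (X k'' j i) - real (X' k'' j i))"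
    by (rule sum.swap)
  also have "\<dots> \<le> alloc_gap n m K X X'"
    using \<open>k \<le> K\<close> by (intro alloc_gap_ge_partial_sum[OF le]) auto
  finally show ?thesis .
qed

lemma scaled_lipschitz_le:
  fixes f :: "real \<Rightarrow> real"
  assumes "L-lipschitz_on {0..1} f" "0 \<le> s'" "s' \<le> s" "s \<le> r" "0 < r"
  shows "r * f (s' / r) \<le> r * f (s / r) + L * (s - s')"
proof -
  have "f (s' / r) - f (s / r) \<le> L * dist (s' / r) (s / r)"
    using lipschitz_onD[OF assms(1), of "s' / r" "s / r"] assms by (simp add: dist_real_def abs_le_iff)
  also have "\<dots> = L * (s - s') / r"
    using assms by (simp add: dist_real_def divide_simps)
  finally show ?thesis
    using assms by (simp add: field_simps)
qed

lemma alloc_penalty_le: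
  fixes L :: real
  assumes le: "\<And>k j i. X' k j i \<le> X k j i" and "L \<ge> 0"
    and lip: "\<And>k i. k \<in> {1..K} \<Longrightarrow> i < m \<Longrightarrow> L-lipschitz_on {0..1} (g k i)"
    and cum: "\<And>k i. k \<in> {1..K} \<Longrightarrow> i < m \<Longrightarrow> cum_alloc n X k i \<le> real k * real T / real K"
  shows "alloc_penalty n m K T g X' \<le> alloc_penalty n m K T g X + L * real K * alloc_gap n m K X X'"
proof -
  have cum_mono: "cum_alloc n X' k i \<le> cum_alloc n X k i" for k i
    unfolding cum_alloc_def of_nat_le_iff by (intro sum_mono le)
  have term_le: "(real k * real T / real K) * g k i (cum_alloc n X' k i / (real k * real T / real K))
      \<le> (real k * real T / real K) * g k i (cum_alloc n X k i / (real k * real T / real K))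
        + L * (cum_alloc n X k i - cum_alloc n X' k i)"
    if "k \<in> {1..K}" "i < m" for k i
  proof (cases "T = 0")
    case False
    show ?thesis
    proof (rule scaled_lipschitz_le)
      show "L-lipschitz_on {0..1} (g k i)" "cum_alloc n X k i \<le> real k * real T / real K"
        using lip cum that by auto
      show "0 \<le> cum_alloc n X' k i"
        unfolding cum_alloc_def by (rule of_nat_0_le_iff)
      show "cum_alloc n X' k i \<le> cum_alloc n X k i"
        by (rule cum_mono)
      show "0 < real k * real T / real K"
        using that False by auto
    qed
  qed (use cum_mono \<open>L \<ge> 0\<close> in simp)
  have "alloc_penalty n m K T g X' \<le> (\<Sum>k\<in>{1..K}. \<Sum>i<m.
      (real k * real T / real K) * g k i (cum_alloc n X k i / (real k * real T / real K))
        + L * (cum_alloc n X k i - cum_alloc n X' k i))"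
    unfolding alloc_penalty_def by (intro sum_mono term_le) auto
  also have "\<dots> = alloc_penalty n m K T g X
      + L * (\<Sum>k\<in>{1..K}. \<Sum>i<m. cum_alloc n X k i - cum_alloc n X' k i)"
    by (simp add: alloc_penalty_def sum.distrib sum_distrib_left)
  also have "\<dots> \<le> alloc_penalty n m K T g X + L * (\<Sum>k\<in>{1..K}. alloc_gap n m K X X')"
    using sum_cum_alloc_diff_le_alloc_gap[OF le] \<open>L \<ge> 0\<close> by (intro add_left_mono mult_left_mono sum_mono) auto
  finally show ?thesis by simp
qed

lemma alloc_obj_le:
  fixes L :: real
  assumes "\<And>k j i. X' k j i \<le> X k j i" and "L \<ge> 0"
    and "\<And>k i. k \<in> {1..K} \<Longrightarrow> i < m \<Longrightarrow> L-lipschitz_on {0..1} (g k i)"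
    and "\<And>k i. k \<in> {1..K} \<Longrightarrow> i < m \<Longrightarrow> cum_alloc n X k i \<le> real k * real T / real K"
  shows "alloc_obj n m c K T g X'
    \<le> alloc_obj n m c K T g X + ((\<Sum>j<n. \<Sum>i<m. \<bar>c j i\<bar>) + L * real K) * alloc_gap n m K X X'"
  using alloc_cost_le[of X' X n m c K] alloc_penalty_le[of X' X L K m g n T] assms
  by (simp add: alloc_obj_eq distrib_right)

lemma cum_alloc_le_capacity:
  assumes "X \<in> feasible_allocs n m S K b" "k \<le> K" "i < m"
  shows "cum_alloc n X k i \<le> real (\<Sum>k''\<in>{1..k}. \<Sum>j<n. b k'' j)"
proof -
  have "(\<Sum>j<n. \<Sum>k''\<in>{1..k}. X k'' j i) \<le> (\<Sum>j<n. \<Sum>k''\<in>{1..k}. \<Sum>i'<m. X k'' j i')"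
    using assms by (intro sum_mono member_le_sum) auto
  also have "\<dots> \<le> (\<Sum>j<n. \<Sum>k''\<in>{1..k}. b k'' j)"
    using assms by (intro sum_mono) (auto simp: feasible_allocs_def)
  also have "\<dots> = (\<Sum>k''\<in>{1..k}. \<Sum>j<n. b k'' j)"
    by (rule sum.swap)
  finally show ?thesis
    unfolding cum_alloc_def by linarith
qed

lemma Inf_alloc_obj_capacity_le:
  fixes L :: real
  assumes "L \<ge> 0"
    and lip: "\<And>k i. k \<in> {1..K} \<Longrightarrow> i < m \<Longrightarrow> L-lipschitz_on {0..1} (g k i)"
    and cap: "\<And>k. k \<in> {1..K} \<Longrightarrow> real (\<Sum>k''\<in>{1..k}. \<Sum>j<n. b k'' j) \<le> real k * real T / real K"
  shows "Inf (alloc_obj n m c K T g ` feasible_allocs n m S K b')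
    \<le> Inf (alloc_obj n m c K T g ` feasible_allocs n m S K b)
      + ((\<Sum>j<n. \<Sum>i<m. \<bar>c j i\<bar>) + L * real K) * (\<Sum>k\<in>{1..K}. \<Sum>j<n. real (b k j - b' k j))"
proof -
  let ?obj = "alloc_obj n m c K T g"
  let ?C = "(\<Sum>j<n. \<Sum>i<m. \<bar>c j i\<bar>) + L * real K"
  let ?D = "\<Sum>k\<in>{1..K}. \<Sum>j<n. real (b k j - b' k j)"
  have "Inf (?obj ` feasible_allocs n m S K b') - ?C * ?D \<le> Inf (?obj ` feasible_allocs n m S K b)"
  proof (rule cInf_greatest)
    have "(\<lambda>_ _ _. 0) \<in> feasible_allocs n m S K b"
      by (simp add: feasible_allocs_def supp_ok_def)
    then show "?obj ` feasible_allocs n m S K b \<noteq> {}" by blast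
  next
    fix y assume "y \<in> ?obj ` feasible_allocs n m S K b"
    then obtain X where X: "X \<in> feasible_allocs n m S K b" and y: "y = ?obj X" by blast
    define X' where "X' = cap_alloc b' X"
    have le: "X' k j i \<le> X k j i" for k j i
      unfolding X'_def by (rule cap_alloc_le)
    have "X' \<in> feasible_allocs n m S K b'"
      using X unfolding X'_def by (intro cap_alloc_feasible) (simp add: feasible_allocs_def)
    then have "Inf (?obj ` feasible_allocs n m S K b') \<le> ?obj X'"
      by (intro cInf_lower imageI bdd_below_finite finite_imageI finite_feasible_allocs)
    also have "\<dots> \<le> ?obj X + ?C * alloc_gap n m K X X'"
    proof (rule alloc_obj_le)
      show "cum_alloc n X k i \<le> real k * real T / real K" if "k \<in> {1..K}" "i < m" for k i
        using cum_alloc_le_capacity[OF X, of k i] cap[of k] that by auto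
    qed (use le lip \<open>L \<ge> 0\<close> in auto)
    also have "\<dots> \<le> ?obj X + ?C * ?D"
      using alloc_gap_cap_alloc_le[OF X, of b'] \<open>L \<ge> 0\<close> unfolding X'_def
      by (intro add_left_mono mult_left_mono add_nonneg_nonneg sum_nonneg) auto
    finally show "Inf (?obj ` feasible_allocs n m S K b') - ?C * ?D \<le> y"
      using y by simp
  qed
  then show ?thesis by simp
qed

text \<open>Truncated subtraction: this is the positive part of the surplus of type-j arrivals in
  epoch k over those in epoch 1, for epochs of length d.\<close>
definition epoch_excess :: "(nat \<Rightarrow> nat) \<Rightarrow> nat \<Rightarrow> nat \<Rightarrow> nat \<Rightarrow> nat" where
  "epoch_excess \<omega> d k j = arrivals \<omega> j ((k - 1) * d) (k * d) - arrivals \<omega> j 0 d"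

lemma V_proxy1_le_V_off_plus_excess:
  fixes L :: real
  assumes "K dvd T" "L \<ge> 0"
    and lip: "\<And>k i. k \<in> {1..K} \<Longrightarrow> i < m \<Longrightarrow> L-lipschitz_on {0..1} (g k i)"
  shows "V_proxy1 n m c S K T g \<omega> \<le> V_off n m c S K T g \<omega>
    + ((\<Sum>j<n. \<Sum>i<m. \<bar>c j i\<bar>) + L * real K) * (\<Sum>k\<in>{1..K}. \<Sum>j<n. real (epoch_excess \<omega> (T div K) k j))"
proof -
  define d where "d = T div K"
  have cap: "real (\<Sum>k''\<in>{1..k}. \<Sum>j<n. arrivals \<omega> j ((k'' - 1) * d) (k'' * d)) \<le> real k * real T / real K"
    for k
  proof -
    have "(\<Sum>k''\<in>{1..k}. \<Sum>j<n. arrivals \<omega> j ((k'' - 1) * d) (k'' * d)) \<le> (\<Sum>k''\<in>{1..k}. d)"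
    proof (rule sum_mono)
      fix k'' :: nat assume "k'' \<in> {1..k}"
      then have "k'' * d - (k'' - 1) * d = d" by (cases k'') auto
      then show "(\<Sum>j<n. arrivals \<omega> j ((k'' - 1) * d) (k'' * d)) \<le> d"
        using sum_arrivals_le[where n = n and \<omega> = \<omega> and a = "(k'' - 1) * d" and b = "k'' * d"] by simp
    qed
    also have "real (\<Sum>k''\<in>{1..k}. d) = real k * real T / real K"
      using assms by (simp add: d_def real_of_nat_div)
    finally show ?thesis by linarith
  qed
  show ?thesis
    unfolding V_proxy1_eq_Inf_feasible_allocs V_off_eq_Inf_feasible_allocs epoch_excess_def d_def[symmetric]
    by (rule Inf_alloc_obj_capacity_le[OF \<open>L \<ge> 0\<close> lip cap])
qed

section \<open>Fluctuation of the epoch arrival counts\<close>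

lemma integrable_arrival_law:
  fixes f :: "(nat \<Rightarrow> nat) \<Rightarrow> real"
  assumes "finite (set_pmf P)"
  shows "integrable (measure_pmf (arrival_law P T)) f"
  using assms unfolding arrival_law_def
  by (intro integrable_measure_pmf_finite) (auto simp: set_Pi_pmf intro!: finite_PiE_dflt)

lemma expectation_arrival_indicator_pair:
  assumes "finite (set_pmf P)" "u \<in> {1..T}" "v \<in> {1..T}" "u \<noteq> v"
  shows "measure_pmf.expectation (arrival_law P T) (\<lambda>\<omega>. of_bool (\<omega> u = j) * of_bool (\<omega> v = j) :: real)
       = (pmf P j)\<^sup>2"
proof -
  have "(\<lambda>y. of_bool (y = j) :: real) = indicator {j}" by (auto simp: indicator_def)
  then have "measure_pmf.expectation P (\<lambda>y. of_bool (y = j)) = pmf P j"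
    by (simp add: measure_pmf_single)
  then show ?thesis
    using assms unfolding arrival_law_def
    by (subst expectation_Pi_pmf_two_coords) (auto intro: integrable_measure_pmf_finite simp: power2_eq_square)
qed

lemma expectation_indicator_differences_orthogonal:
  assumes "finite (set_pmf P)" and "distinct [a, b, a', b']" and "{a, b, a', b'} \<subseteq> {1..T}"
  shows "measure_pmf.expectation (arrival_law P T)
     (\<lambda>\<omega>. (of_bool (\<omega> a = j) - of_bool (\<omega> b = j)) * (of_bool (\<omega> a' = j) - of_bool (\<omega> b' = j)) :: real) = 0"
proof -
  let ?E = "measure_pmf.expectation (arrival_law P T)"
  let ?Y = "\<lambda>t \<omega>. of_bool (\<omega> t = j) :: real"
  have I: "integrable (measure_pmf (arrival_law P T)) f" for f :: "(nat \<Rightarrow> nat) \<Rightarrow> real"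
    using assms(1) by (rule integrable_arrival_law)
  have "?E (\<lambda>\<omega>. (?Y a \<omega> - ?Y b \<omega>) * (?Y a' \<omega> - ?Y b' \<omega>))
      = (?E (\<lambda>\<omega>. ?Y a \<omega> * ?Y a' \<omega>) - ?E (\<lambda>\<omega>. ?Y a \<omega> * ?Y b' \<omega>))
        - (?E (\<lambda>\<omega>. ?Y b \<omega> * ?Y a' \<omega>) - ?E (\<lambda>\<omega>. ?Y b \<omega> * ?Y b' \<omega>))"
    by (simp add: algebra_simps I)
  also have "\<dots> = 0"
    using assms by (simp add: expectation_arrival_indicator_pair)
  finally show ?thesis .
qed

lemma expectation_epoch_excess_le:
  assumes fin: "finite (set_pmf P)" and k: "k \<in> {1..K}" and T: "K * d = T"
  shows "measure_pmf.expectation (arrival_law P T) (\<lambda>\<omega>. real (epoch_excess \<omega> d k j)) \<le> sqrt d"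
proof (cases "k = 1")
  case True
  then show ?thesis by (simp add: epoch_excess_def)
next
  case False
  define e where "e = (k - 1) * d"
  have e: "d \<le> e" "e + d \<le> T" "k * d = d + e"
    using False k T mult_le_mono1[of k K d] by (auto simp: e_def mult_eq_if)
  define Z :: "nat \<Rightarrow> (nat \<Rightarrow> nat) \<Rightarrow> real" where "Z t \<omega> = of_bool (\<omega> (t + e) = j) - of_bool (\<omega> t = j)" for t \<omega>
  let ?E = "measure_pmf.expectation (arrival_law P T)"
  have I: "integrable (measure_pmf (arrival_law P T)) f" for f :: "(nat \<Rightarrow> nat) \<Rightarrow> real"
    using fin by (rule integrable_arrival_law)
  have excess_le: "real (epoch_excess \<omega> d k j) \<le> \<bar>\<Sum>t\<in>{1..d}. Z t \<omega>\<bar>" for \<omega>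
  proof -
    have "real (epoch_excess \<omega> d k j) \<le> \<bar>real (arrivals \<omega> j e (d + e)) - real (arrivals \<omega> j 0 (d + 0))\<bar>"
      unfolding epoch_excess_def e_def[symmetric] e(3) by (simp add: of_nat_diff)
    also have "\<dots> = \<bar>\<Sum>t\<in>{1..d}. Z t \<omega>\<bar>"
      unfolding arrivals_shift by (simp only: Z_def sum_subtractf add_0_right)
    finally show ?thesis .
  qed
  have second_moment: "?E (\<lambda>\<omega>. (\<Sum>t\<in>{1..d}. Z t \<omega>)\<^sup>2) \<le> d"
  proof -
    have "?E (\<lambda>\<omega>. (\<Sum>t\<in>{1..d}. Z t \<omega>)\<^sup>2) = (\<Sum>t\<in>{1..d}. ?E (\<lambda>\<omega>. (Z t \<omega>)\<^sup>2))"
    proof (rule integral_sum_orthogonal_square)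
      fix s t assume "s \<in> {1..d}" "t \<in> {1..d}" "s \<noteq> t"
      then show "?E (\<lambda>\<omega>. Z s \<omega> * Z t \<omega>) = 0"
        unfolding Z_def using e
        by (intro expectation_indicator_differences_orthogonal[OF fin]) auto
    qed (auto simp: I)
    also have "\<dots> \<le> (\<Sum>t\<in>{1..d}. ?E (\<lambda>_. 1))"
      by (intro sum_mono integral_mono I) (auto simp: Z_def)
    finally show ?thesis by simp
  qed
  have "?E (\<lambda>\<omega>. real (epoch_excess \<omega> d k j)) \<le> ?E (\<lambda>\<omega>. \<bar>\<Sum>t\<in>{1..d}. Z t \<omega>\<bar>)"
    by (intro integral_mono I excess_le)
  also have "\<dots> \<le> sqrt (?E (\<lambda>\<omega>. (\<Sum>t\<in>{1..d}. Z t \<omega>)\<^sup>2))"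
    by (intro measure_pmf.expectation_abs_le_sqrt_second_moment I)
  also have "\<dots> \<le> sqrt d"
    using second_moment by simp
  finally show ?thesis .
qed

lemma powr_three_halves_mult_sqrt:
  fixes x y :: real
  assumes "0 \<le> x"
  shows "x powr (3/2) * sqrt (x * y) = x\<^sup>2 * sqrt y"
proof -
  have "x powr (3/2) = x powr 1 * x powr (1/2)"
    unfolding powr_add[symmetric] by simp
  also have "\<dots> = x * sqrt x"
    using assms by (simp add: powr_half_sqrt)
  finally show ?thesis
    using assms by (simp add: real_sqrt_mult power2_eq_square)
qed

lemma expectation_V_proxy1_le_V_off:
  fixes L :: real
  assumes fin: "finite (set_pmf P)" and K: "K \<ge> 1" and "K dvd T" and "L \<ge> 0"
    and lip: "\<And>k i. k \<in> {1..K} \<Longrightarrow> i < m \<Longrightarrow> L-lipschitz_on {0..1} (g k i)"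
  shows "measure_pmf.expectation (arrival_law P T) (V_proxy1 n m c S K T g)
    \<le> measure_pmf.expectation (arrival_law P T) (V_off n m c S K T g)
      + ((\<Sum>j<n. \<Sum>i<m. \<bar>c j i\<bar>) + L) * real n * real K powr (3/2) * sqrt (real T)"
proof -
  define C0 where "C0 = (\<Sum>j<n. \<Sum>i<m. \<bar>c j i\<bar>)"
  have "C0 \<ge> 0" unfolding C0_def by (intro sum_nonneg) auto
  define d where "d = T div K"
  have T: "K * d = T" using \<open>K dvd T\<close> by (simp add: d_def)
  let ?E = "measure_pmf.expectation (arrival_law P T)"
  have I: "integrable (measure_pmf (arrival_law P T)) f" for f :: "(nat \<Rightarrow> nat) \<Rightarrow> real"
    using fin by (rule integrable_arrival_law)
  have "?E (V_proxy1 n m c S K T g) \<le> ?E (\<lambda>\<omega>. V_off n m c S K T g \<omega>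
      + (C0 + L * real K) * (\<Sum>k\<in>{1..K}. \<Sum>j<n. real (epoch_excess \<omega> d k j)))"
    using V_proxy1_le_V_off_plus_excess[OF \<open>K dvd T\<close> \<open>L \<ge> 0\<close> lip]
    by (intro integral_mono I) (simp add: C0_def d_def)
  also have "\<dots> = ?E (V_off n m c S K T g)
      + (C0 + L * real K) * (\<Sum>k\<in>{1..K}. \<Sum>j<n. ?E (\<lambda>\<omega>. real (epoch_excess \<omega> d k j)))"
    by (simp add: I Bochner_Integration.integral_sum)
  also have "\<dots> \<le> ?E (V_off n m c S K T g) + (C0 + L * real K) * (\<Sum>k\<in>{1..K}. \<Sum>j<n. sqrt d)"
    using expectation_epoch_excess_le[OF fin _ T] \<open>C0 \<ge> 0\<close> \<open>L \<ge> 0\<close>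
    by (intro add_left_mono mult_left_mono sum_mono) auto
  also have "(\<Sum>k\<in>{1..K}. \<Sum>j<n. sqrt d) = real K * real n * sqrt d"
    by simp
  also have "(C0 + L * real K) * (real K * real n * sqrt d) \<le> (C0 + L) * real K * (real K * real n * sqrt d)"
    using K \<open>C0 \<ge> 0\<close> mult_left_mono[of 1 "real K" C0] by (intro mult_right_mono) (auto simp: distrib_right)
  also have "\<dots> = (C0 + L) * real n * (real K powr (3/2) * sqrt (real K * real d))"
    by (simp add: powr_three_halves_mult_sqrt power2_eq_square)
  also have "\<dots> = (C0 + L) * real n * real K powr (3/2) * sqrt (real T)"
    using T by (simp add: mult.assoc flip: of_nat_mult)
  finally show ?thesis
    unfolding C0_def by simp
qed

theorem lemma3:
  fixes n m :: nat and c :: "nat \<Rightarrow> nat \<Rightarrow> real" and S :: "nat \<Rightarrow> nat set"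
    and L :: real and P :: "nat pmf"
  assumes "set_pmf P \<subseteq> {..<n}" and "L \<ge> 0"
  shows "\<exists>C. \<forall>K T (\<rho> :: nat \<Rightarrow> nat \<Rightarrow> real) (g :: nat \<Rightarrow> nat \<Rightarrow> real \<Rightarrow> real).
     K \<ge> 1 \<longrightarrow> K dvd T \<longrightarrow>
     (\<forall>k\<in>{1..K}. \<forall>i<m. \<rho> k i \<in> {0..1} \<and> convex_on {0..1} (g k i)
        \<and> L-lipschitz_on {0..1} (g k i) \<and> (\<forall>x\<in>{0..1}. g k i x \<ge> 0) \<and> g k i (\<rho> k i) = 0) \<longrightarrow>
     measure_pmf.expectation (arrival_law P T) (V_proxy1 n m c S K T g)
       \<le> measure_pmf.expectation (arrival_law P T) (V_off n m c S K T g)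
          + C * real K powr (3/2) * sqrt (real T)"
proof -
  have fin: "finite (set_pmf P)"
    using assms(1) finite_subset by blast
  show ?thesis
  proof (intro exI[of _ "((\<Sum>j<n. \<Sum>i<m. \<bar>c j i\<bar>) + L) * real n"] allI impI)
    fix K T :: nat and \<rho> :: "nat \<Rightarrow> nat \<Rightarrow> real" and g :: "nat \<Rightarrow> nat \<Rightarrow> real \<Rightarrow> real"
    assume "K \<ge> 1" "K dvd T" and "\<forall>k\<in>{1..K}. \<forall>i<m. \<rho> k i \<in> {0..1} \<and> convex_on {0..1} (g k i)
        \<and> L-lipschitz_on {0..1} (g k i) \<and> (\<forall>x\<in>{0..1}. g k i x \<ge> 0) \<and> g k i (\<rho> k i) = 0"
    then show "measure_pmf.expectation (arrival_law P T) (V_proxy1 n m c S K T g)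
       \<le> measure_pmf.expectation (arrival_law P T) (V_off n m c S K T g)
          + ((\<Sum>j<n. \<Sum>i<m. \<bar>c j i\<bar>) + L) * real n * real K powr (3/2) * sqrt (real T)"
      using expectation_V_proxy1_le_V_off[OF fin _ _ \<open>L \<ge> 0\<close>] by blast
  qed
qed

end
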